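(* If $\dim M=8$, then, writing $A_a=2^k\cosh(\tfrac{a_1}{2}c)\cdots\cosh(\tfrac{a_k}{2}c)\widehat A(TM,\nabla^{TM})$ and $A_b=2^k\cosh(\tfrac{b_1}{2}c)\cdots\cosh(\tfrac{b_k}{2}c)\widehat A(TM,\nabla^{TM})$, $$\{A_a\}^{(8)}-\{A_b\}^{(8)}-\tfrac{1}{16}\{A_b\,\mathrm{ch}(W)\}^{(8)}=-\tfrac{1}{24}\{P\,A_a\}^{(8)}+\tfrac{1}{24}\{P\,A_b\}^{(8)}+\tfrac{1}{384}\{P\,A_b\,\mathrm{ch}(W)\}^{(8)}+\tfrac{1}{18432}\{P^2\,2^k\,\mathrm{ch}(W)\}^{(8)}.$$
   Context: $M$ is a Riemannian manifold with Levi-Civita connection $\nabla^{TM}$ and curvature $R^{TM}$; characteristic forms are Chern–Weil forms of the given connections and $\omega^{(i)}$ denotes the degree-$i$ component. $\mathrm{ch}(E)=\mathrm{tr}\exp(\frac{\sqrt{-1}}{2\pi}R^E)$, extended additively to formal differences; $\widetilde E=E-\dim E\cdot\mathbb{C}$. $\widehat A(TM,\nabla^{TM})=\det^{1/2}\Big(\frac{\frac{\sqrt{-1}}{4\pi}R^{TM}}{\sinh(\frac{\sqrt{-1}}{4\pi}R^{TM})}\Big)$; $p_1$ is the first Pontryagin form. $\xi$ is a complex line bundle with Hermitian connection; for $m\in\mathbb{Z}$, $(\xi^{\otimes m})_{\mathbb{R}}$ is the underlying real oriented rank-two bundle of $\xi^{\otimes m}$, $\xi_{\mathbb{R}}=(\xi^{\otimes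 1})_{\mathbb{R}}$, and the formal Chern roots of $\xi_{\mathbb{R}}\otimes\mathbb{C}$ are $\pm c$. $k\ge1$, $a_t,b_t\in\mathbb{Z}$. $P=p_1(TM)-\sum_{t=1}^k(a_t^2+2b_t^2)p_1(\xi_{\mathbb{R}})$ and $W=\sum_{t=1}^k\big(\widetilde{(\xi^{\otimes b_t})_{\mathbb{R}}\otimes\mathbb{C}}-\widetilde{(\xi^{\otimes a_t})_{\mathbb{R}}\otimes\mathbb{C}}\big)$. *)

theory Defs
  imports "HOL-Computational_Algebra.Formal_Power_Series"
begin

text \<open>A formal variable t
is attached to each formal Chern root (a 2-form): root r stands for r*t,
so the form-degree-2i component of a characteristic form is the coefficient
of t^i.  fps_exp a is exp(a t) (library).\<close>

definition fps_cosh :: "real \<Rightarrow> real fps" where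
  "fps_cosh a = fps_const (1/2) * (fps_exp a + fps_exp (-a))"

text \<open>sinh(a t)/(a t) (equal to 1 when a = 0).\<close>
definition fps_sinhc :: "real \<Rightarrow> real fps" where
  "fps_sinhc a = Abs_fps (\<lambda>n. if even n then a ^ n / fact (n + 1) else 0)"

text \<open>A-hat form of an 8-manifold with formal Pontryagin roots x 0,...,x 3:
  product over j of (x_j t/2) / sinh(x_j t/2).\<close>
definition Ahat8 :: "(nat \<Rightarrow> real) \<Rightarrow> real fps" where
  "Ahat8 x = (\<Prod>j<4. inverse (fps_sinhc (x j / 2)))"

definition p1TM8 :: "(nat \<Rightarrow> real) \<Rightarrow> real fps" where
  "p1TM8 x = fps_const (\<Sum>j<4. (x j)^2) * fps_X ^ 2"

definition p1xi :: "real \<Rightarrow> real fps" where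
  "p1xi c = fps_const (c^2) * fps_X ^ 2"

text \<open>ch of (xi^m)_R tensor C = xi^m + xi^(-m): exp(m c t) + exp(-m c t).\<close>
definition ch_xiR :: "real \<Rightarrow> int \<Rightarrow> real fps" where
  "ch_xiR c m = fps_exp (of_int m * c) + fps_exp (- (of_int m * c))"

definition ch_xiR_red :: "real \<Rightarrow> int \<Rightarrow> real fps" where
  "ch_xiR_red c m = ch_xiR c m - 2"

definition chW :: "real \<Rightarrow> nat \<Rightarrow> (nat \<Rightarrow> int) \<Rightarrow> (nat \<Rightarrow> int) \<Rightarrow> real fps" where
  "chW c k a b = (\<Sum>t\<in>{1..k}. ch_xiR_red c (b t) - ch_xiR_red c (a t))"

definition Pform :: "(nat \<Rightarrow> real) \<Rightarrow> real \<Rightarrow> nat \<Rightarrow> (nat \<Rightarrow> int) \<Rightarrow> (nat \<Rightarrow> int) \<Rightarrow> real fps" where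
  "Pform x c k a b = p1TM8 x - fps_const (\<Sum>t\<in>{1..k}. of_int ((a t)^2 + 2 * (b t)^2)) * p1xi c"

definition Aform :: "(nat \<Rightarrow> real) \<Rightarrow> real \<Rightarrow> nat \<Rightarrow> (nat \<Rightarrow> int) \<Rightarrow> real fps" where
  "Aform x c k a = fps_const (2 ^ k) * (\<Prod>t\<in>{1..k}. fps_cosh (of_int (a t) * c / 2)) * Ahat8 x"

definition deg8 :: "real fps \<Rightarrow> real" where
  "deg8 f = fps_nth f 4"

end

(* Every form involved is a power series in t whose coefficients of t and t^3 vanish, so in
   degree at most 8 only the coefficients of 1, t^2, t^4 matter, and these multiply as
   (1 + u t^2 + v t^4)(1 + u' t^2 + v' t^4) = 1 + (u + u') t^2 + (v + u u' + v') t^4 mod t^5.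
   Expressed through the power sums of the a_t, the b_t and the Pontryagin roots x_j, the quartic
   power sums of the a_t and b_t cancel between A_a - A_b and ch(W), the P^2 term vanishes because
   ch(W) has no constant term, and both sides equal 2^k q w / 128, where P = q t^2 and
   ch(W) = w t^2 + O(t^4). *)

theory Submission
  imports Defs
begin

unbundle fps_syntax

definition even_jet :: "'a::comm_ring_1 fps \<Rightarrow> 'a \<Rightarrow> 'a \<Rightarrow> bool" where
  "even_jet f u v \<longleftrightarrow> f $ 0 = 1 \<and> f $ 1 = 0 \<and> f $ 2 = u \<and> f $ 3 = 0 \<and> f $ 4 = v"

definition power_sum :: "'i set \<Rightarrow> ('i \<Rightarrow> real) \<Rightarrow> nat \<Rightarrow> real" where
  "power_sum S r n = (\<Sum>i\<in>S. r i ^ n)"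

lemma fps_mult_nth_upto_4:
  fixes f g :: "'a::comm_ring_1 fps"
  shows "(f * g) $ 1 = f $ 0 * g $ 1 + f $ 1 * g $ 0"
    and "(f * g) $ 2 = f $ 0 * g $ 2 + f $ 1 * g $ 1 + f $ 2 * g $ 0"
    and "(f * g) $ 3 = f $ 0 * g $ 3 + f $ 1 * g $ 2 + f $ 2 * g $ 1 + f $ 3 * g $ 0"
    and "(f * g) $ 4 = f $ 0 * g $ 4 + f $ 1 * g $ 3 + f $ 2 * g $ 2 + f $ 3 * g $ 1 + f $ 4 * g $ 0"
  by (simp_all add: fps_mult_nth numeral_eq_Suc atLeast0AtMost)

lemma even_jet_mult:
  "even_jet f u v \<Longrightarrow> even_jet g u' v' \<Longrightarrow> even_jet (f * g) (u + u') (v + u * u' + v')"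
  unfolding even_jet_def by (simp add: fps_mult_nth_upto_4 algebra_simps)

lemma even_jet_prod:
  fixes f :: "'i \<Rightarrow> 'a::field_char_0 fps"
  assumes "finite S" and "\<And>i. i \<in> S \<Longrightarrow> even_jet (f i) (u i) (v i)"
  shows "even_jet (\<Prod>i\<in>S. f i) (\<Sum>i\<in>S. u i)
           ((\<Sum>i\<in>S. v i) + ((\<Sum>i\<in>S. u i)\<^sup>2 - (\<Sum>i\<in>S. (u i)\<^sup>2)) / 2)"
  using assms
proof (induction S rule: finite_induct)
  case empty
  then show ?case by (simp add: even_jet_def)
next
  case (insert i S)
  then have "even_jet (f i * (\<Prod>i\<in>S. f i)) (u i + (\<Sum>i\<in>S. u i))
      (v i + u i * (\<Sum>i\<in>S. u i) + ((\<Sum>i\<in>S. v i) + ((\<Sum>i\<in>S. u i)\<^sup>2 - (\<Sum>i\<in>S. (u i)\<^sup>2)) / 2))"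
    by (intro even_jet_mult) auto
  then show ?case
    using insert by (simp add: field_simps power2_eq_square)
qed

lemma even_jet_inverse:
  fixes f :: "'a::field fps"
  assumes "even_jet f u v"
  shows "even_jet (inverse f) (- u) (u\<^sup>2 - v)"
proof -
  define g where "g = inverse f"
  from assms have f: "f $ 0 = 1" "f $ 1 = 0" "f $ 2 = u" "f $ 3 = 0" "f $ 4 = v"
    by (simp_all add: even_jet_def)
  have "f * g = 1"
    unfolding g_def using f by (simp add: inverse_mult_eq_1')
  then have fg: "(f * g) $ n = (if n = 0 then 1 else 0)" for n
    by simp
  have g0: "g $ 0 = 1" using fg[of 0] f by simp
  have g1: "g $ 1 = 0" using fg[of 1] f g0 by (simp add: fps_mult_nth_upto_4)
  have g2: "g $ 2 = - u"
    using fg[of 2] f g0 g1 by (simp add: fps_mult_nth_upto_4 eq_neg_iff_add_eq_0)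
  have g3: "g $ 3 = 0" using fg[of 3] f g0 g1 g2 by (simp add: fps_mult_nth_upto_4)
  have "g $ 4 - u\<^sup>2 + v = 0"
    using fg[of 4] f g0 g1 g2 g3 by (simp add: fps_mult_nth_upto_4 power2_eq_square)
  then have g4: "g $ 4 = u\<^sup>2 - v"
    by (metis diff_add_eq eq_diff_eq eq_iff_diff_eq_0)
  show ?thesis
    unfolding even_jet_def g_def[symmetric] using g0 g1 g2 g3 g4 by simp
qed

lemma even_jet_fps_cosh: "even_jet (fps_cosh a) (a\<^sup>2 / 2) (a ^ 4 / 24)"
  unfolding even_jet_def fps_cosh_def by (simp add: fps_exp_def fact_numeral power2_eq_square)

lemma even_jet_fps_sinhc: "even_jet (fps_sinhc a) (a\<^sup>2 / 6) (a ^ 4 / 120)"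
  unfolding even_jet_def fps_sinhc_def by (simp add: fact_numeral)

lemma even_jet_Ahat8:
  "even_jet (Ahat8 x) (- power_sum {..<4} x 2 / 24)
     (power_sum {..<4} x 2 ^ 2 / 1152 + power_sum {..<4} x 4 / 2880)"
proof -
  let ?p = "power_sum {..<4} x"
  have "even_jet (Ahat8 x) (\<Sum>j<4. - ((x j / 2)\<^sup>2 / 6))
      ((\<Sum>j<4. ((x j / 2)\<^sup>2 / 6)\<^sup>2 - (x j / 2) ^ 4 / 120)
        + ((\<Sum>j<4. - ((x j / 2)\<^sup>2 / 6))\<^sup>2 - (\<Sum>j<4. (- ((x j / 2)\<^sup>2 / 6))\<^sup>2)) / 2)"
    unfolding Ahat8_def by (intro even_jet_prod even_jet_inverse even_jet_fps_sinhc) simp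
  moreover have "(\<Sum>j<4. - ((x j / 2)\<^sup>2 / 6)) = - ?p 2 / 24"
    by (simp add: power_sum_def sum_negf sum_divide_distrib power_divide)
  moreover have "(\<Sum>j<4. ((x j / 2)\<^sup>2 / 6)\<^sup>2 - (x j / 2) ^ 4 / 120) = 7 * ?p 4 / 5760"
    and "(\<Sum>j<4. (- ((x j / 2)\<^sup>2 / 6))\<^sup>2) = ?p 4 / 576"
    by (simp_all add: power_sum_def sum_divide_distrib sum_distrib_left power_divide
        flip: power_mult)
  ultimately have "even_jet (Ahat8 x) (- ?p 2 / 24)
      (7 * ?p 4 / 5760 + ((- ?p 2 / 24)\<^sup>2 - ?p 4 / 576) / 2)"
    by (simp only:)
  moreover have "7 * ?p 4 / 5760 + ((- ?p 2 / 24)\<^sup>2 - ?p 4 / 576) / 2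
      = ?p 2 ^ 2 / 1152 + ?p 4 / 2880"
    by (simp add: field_simps power2_eq_square)
  ultimately show ?thesis
    by (simp only:)
qed

lemma even_jet_prod_fps_cosh:
  assumes "finite S"
  shows "even_jet (\<Prod>i\<in>S. fps_cosh (r i * c / 2)) (c\<^sup>2 * power_sum S r 2 / 8)
           (c ^ 4 * (power_sum S r 2 ^ 2 / 128 - power_sum S r 4 / 192))"
proof -
  let ?s = "power_sum S r"
  have "even_jet (\<Prod>i\<in>S. fps_cosh (r i * c / 2)) (\<Sum>i\<in>S. (r i * c / 2)\<^sup>2 / 2)
      ((\<Sum>i\<in>S. (r i * c / 2) ^ 4 / 24)
        + ((\<Sum>i\<in>S. (r i * c / 2)\<^sup>2 / 2)\<^sup>2 - (\<Sum>i\<in>S. ((r i * c / 2)\<^sup>2 / 2)\<^sup>2)) / 2)"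
    using assms by (intro even_jet_prod even_jet_fps_cosh)
  moreover have "(\<Sum>i\<in>S. (r i * c / 2)\<^sup>2 / 2) = c\<^sup>2 * ?s 2 / 8"
    and "(\<Sum>i\<in>S. (r i * c / 2) ^ 4 / 24) = c ^ 4 * ?s 4 / 384"
    and "(\<Sum>i\<in>S. ((r i * c / 2)\<^sup>2 / 2)\<^sup>2) = c ^ 4 * ?s 4 / 64"
    by (simp_all add: power_sum_def sum_divide_distrib sum_distrib_left power_divide
        power_mult_distrib mult.commute flip: power_mult)
  ultimately have "even_jet (\<Prod>i\<in>S. fps_cosh (r i * c / 2)) (c\<^sup>2 * ?s 2 / 8)
      (c ^ 4 * ?s 4 / 384 + ((c\<^sup>2 * ?s 2 / 8)\<^sup>2 - c ^ 4 * ?s 4 / 64) / 2)"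
    by (simp only:)
  moreover have "c ^ 4 * ?s 4 / 384 + ((c\<^sup>2 * ?s 2 / 8)\<^sup>2 - c ^ 4 * ?s 4 / 64) / 2
      = c ^ 4 * (?s 2 ^ 2 / 128 - ?s 4 / 192)"
    by (simp add: field_simps power2_eq_square power4_eq_xxxx)
  ultimately show ?thesis
    by (simp only:)
qed

lemma Aform_nth:
  fixes x :: "nat \<Rightarrow> real" and k :: nat and a :: "nat \<Rightarrow> int"
  defines "s \<equiv> power_sum {1..k} (\<lambda>t. of_int (a t))" and "p \<equiv> power_sum {..<4} x"
  shows "Aform x c k a $ 0 = 2 ^ k"
    and "Aform x c k a $ 2 = 2 ^ k * (c\<^sup>2 * s 2 / 8 - p 2 / 24)"
    and "Aform x c k a $ 4 = 2 ^ k * (c ^ 4 * (s 2 ^ 2 / 128 - s 4 / 192)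
           - c\<^sup>2 * s 2 * p 2 / 192 + p 2 ^ 2 / 1152 + p 4 / 2880)"
proof -
  have "even_jet ((\<Prod>t\<in>{1..k}. fps_cosh (of_int (a t) * c / 2)) * Ahat8 x)
      (c\<^sup>2 * s 2 / 8 + - p 2 / 24)
      (c ^ 4 * (s 2 ^ 2 / 128 - s 4 / 192) + c\<^sup>2 * s 2 / 8 * (- p 2 / 24)
        + (p 2 ^ 2 / 1152 + p 4 / 2880))"
    unfolding s_def p_def by (intro even_jet_mult even_jet_prod_fps_cosh even_jet_Ahat8) simp
  then show "Aform x c k a $ 0 = 2 ^ k"
    and "Aform x c k a $ 2 = 2 ^ k * (c\<^sup>2 * s 2 / 8 - p 2 / 24)"
    and "Aform x c k a $ 4 = 2 ^ k * (c ^ 4 * (s 2 ^ 2 / 128 - s 4 / 192)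
           - c\<^sup>2 * s 2 * p 2 / 192 + p 2 ^ 2 / 1152 + p 4 / 2880)"
    unfolding Aform_def even_jet_def mult.assoc fps_mult_left_const_nth by simp_all
qed

lemma ch_xiR_red_nth:
  shows "ch_xiR_red c m $ 0 = 0" and "ch_xiR_red c m $ 1 = 0"
    and "ch_xiR_red c m $ 2 = (of_int m * c)\<^sup>2" and "ch_xiR_red c m $ 3 = 0"
    and "ch_xiR_red c m $ 4 = (of_int m * c) ^ 4 / 12"
  by (simp_all add: ch_xiR_red_def ch_xiR_def fps_exp_def fact_numeral fps_numeral_nth)

lemma chW_nth:
  fixes k :: nat and a b :: "nat \<Rightarrow> int"
  defines "s\<^sub>a \<equiv> power_sum {1..k} (\<lambda>t. of_int (a t))"
    and "s\<^sub>b \<equiv> power_sum {1..k} (\<lambda>t. of_int (b t))"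
  shows "chW c k a b $ 0 = 0" and "chW c k a b $ 1 = 0"
    and "chW c k a b $ 2 = c\<^sup>2 * (s\<^sub>b 2 - s\<^sub>a 2)" and "chW c k a b $ 3 = 0"
    and "chW c k a b $ 4 = c ^ 4 * (s\<^sub>b 4 - s\<^sub>a 4) / 12"
  by (simp_all add: chW_def fps_sum_nth ch_xiR_red_nth ch_xiR_red_nth(2)[simplified]
      s\<^sub>a_def s\<^sub>b_def power_sum_def sum_subtractf sum_distrib_left sum_divide_distrib
      power_mult_distrib mult.commute right_diff_distrib)

lemma Pform_eq:
  fixes x :: "nat \<Rightarrow> real" and k :: nat and a b :: "nat \<Rightarrow> int"
  defines "s\<^sub>a \<equiv> power_sum {1..k} (\<lambda>t. of_int (a t))"
    and "s\<^sub>b \<equiv> power_sum {1..k} (\<lambda>t. of_int (b t))" and "p \<equiv> power_sum {..<4} x"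
  shows "Pform x c k a b = fps_const (p 2 - (s\<^sub>a 2 + 2 * s\<^sub>b 2) * c\<^sup>2) * fps_X\<^sup>2"
proof -
  have "(\<Sum>t\<in>{1..k}. of_int ((a t)\<^sup>2 + 2 * (b t)\<^sup>2)) = s\<^sub>a 2 + 2 * s\<^sub>b 2"
    by (simp add: s\<^sub>a_def s\<^sub>b_def power_sum_def sum.distrib sum_distrib_left)
  then show ?thesis
    unfolding Pform_def p1TM8_def p1xi_def p_def power_sum_def
    by (simp only: mult.assoc[symmetric] fps_const_mult left_diff_distrib[symmetric] fps_const_sub)
qed

theorem corollary3p4:
  fixes x :: "nat \<Rightarrow> real" and c :: real and k :: nat and a b :: "nat \<Rightarrow> int"
  assumes "k \<ge> 1"
  shows "deg8 (Aform x c k a) - deg8 (Aform x c k b) - 1/16 * deg8 (Aform x c k b * chW c k a b)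
       = - 1/24 * deg8 (Pform x c k a b * Aform x c k a)
         + 1/24 * deg8 (Pform x c k a b * Aform x c k b)
         + 1/384 * deg8 (Pform x c k a b * Aform x c k b * chW c k a b)
         + 1/18432 * deg8 ((Pform x c k a b)^2 * fps_const (2 ^ k) * chW c k a b)"
  unfolding deg8_def Pform_eq power2_eq_square[of "fps_const _ * fps_X\<^sup>2"] mult.assoc
  by (simp add: fps_X_power_mult_nth fps_mult_nth_upto_4 Aform_nth chW_nth chW_nth(2)[simplified]
      field_simps power2_eq_square power4_eq_xxxx)

end
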